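(* Consider the semi-discrete flux globalization based low-dissipation path-conservative central-upwind (LD PCCU) scheme described in the context, and assume that all quantities appearing in it are well defined (all densities $\rho^\pm_{j+1/2}>0$, all $\Gamma^\pm_{j+1/2}>0$, the square roots defining $c^\pm_{j+1/2}$ are real, $a^+_{j+1/2}-a^-_{j+1/2}>0$, and $\rho^*_{j+1/2}\neq0$, $\Gamma^*_{j+1/2}\neq0$ for all relevant $j$). 1. If at some time $t$ the cell averages satisfy $\overline\Gamma_j\equiv\widehat\Gamma$ and $\overline\Pi_j\equiv\widehat\Pi$ for all $j$ (including ghost cells), where $\widehat\Gamma,\widehat\Pi$ are constants, then $$\frac{d}{dt}\overline\Gamma_j=\frac{d}{dt}\overline\Pi_j=0\quad\text{for all } j=1,\dots,N,$$ i.e., the fourth and fifth components of the right-hand side of the semi-discrete scheme vanish. 2. Suppose that at time level $t^n$ the cell-centered velocities and pressures satisfy $u^n_j\equiv\widehat u$ and $p^n_j\equiv\widehat p$ for all $j$ (including ghost cells), with constants $\widehat u,\widehat p$, and let the cell averages at $t^{n+1}=t^n+\Delta t$ be computed by one forward Euler step $$\overline{\mathbf U}^{\,n+1}_j=\overline{\mathbf U}^{\,n}_j-\frac{\Delta t}{\Delta x}\Big(\boldsymbol{\mathcal K}_{j+1/2}-\boldsymbol{\mathcal K}_{j-1/2}\Big),\qquad j=1,\dots,N,$$ with the numerical fluxes evaluated from the data at $t^n$. Assume $\overline\rho^{\,n+1}_j\neq0$ and $\overline\Gamma^{\,n+1}_j\neq0$. Then $$u^{n+1}_j:=\frac{(\overline{\rho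 u})^{n+1}_j}{\overline\rho^{\,n+1}_j}=\widehat u,\qquad p^{n+1}_j:=\frac{1}{\overline\Gamma^{\,n+1}_j}\Big[\overline E^{\,n+1}_j-\frac{\big((\overline{\rho u})^{n+1}_j\big)^2}{2\overline\rho^{\,n+1}_j}-\overline\Pi^{\,n+1}_j\Big]=\widehat p\qquad\text{for all } j=1,\dots,N.$$
   Context: Model: the 1-D $\gamma$-based multifluid system $\rho_t+(\rho u)_x=0$, $(\rho u)_t+(\rho u^2+p)_x=0$, $E_t+[u(E+p)]_x=0$, $\Gamma_t+(u\Gamma)_x=\Gamma u_x$, $\Pi_t+(u\Pi)_x=\Pi u_x$, where $\Gamma=1/(\gamma-1)$, $\Pi=\gamma\pi_\infty/(\gamma-1)$ and the EOS is $p=(E-\tfrac12\rho u^2-\Pi)/\Gamma$. Write $\mathbf U=(\rho,\rho u,E,\Gamma,\Pi)^\top$, $\mathbf F(\mathbf U)=(\rho u,\rho u^2+p,u(E+p),u\Gamma,u\Pi)^\top$. Let ${\rm minmod}(c_1,c_2)$ equal $\min(c_1,c_2)$ if both are positive, $\max(c_1,c_2)$ if both are negative, and $0$ otherwise. Mesh and data: uniform cells $C_j=[x_{j-1/2},x_{j+1/2}]$ of width $\Delta x$, $j=1,\dots,N$, together with finitely many ghost cells on each side supplying the data needed below. Cell averages $\overline{\mathbf U}_j=(\overline\rho_j,(\overline{\rho u})_j,\overline E_j,\overline\Gamma_j,\overline\Pi_j)^\top$ are given; set $u_j=(\overline{\rho u})_j/\overline\rho_j$, $p_j=\big[\overline E_j-((\overline{\rho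 u})_j)^2/(2\overline\rho_j)-\overline\Pi_j\big]/\overline\Gamma_j$, and $\mathbf V_j=(\overline\rho_j,u_j,p_j,\overline\Gamma_j,\overline\Pi_j)^\top$. Reconstruction: $\mathbf V^-_{j+1/2}=\mathbf V_j+\tfrac{\Delta x}{2}(\mathbf V_x)_j$, $\mathbf V^+_{j+1/2}=\mathbf V_{j+1}-\tfrac{\Delta x}{2}(\mathbf V_x)_{j+1}$, where the slopes $(\mathbf V_x)_j$ are computed componentwise by a limiter (e.g. generalized minmod or SBM) with the property that the slope of a component vanishes whenever that component takes the same value in all cells of the stencil. Write $\mathbf V^\pm_{j+1/2}=(\rho^\pm,u^\pm,p^\pm,\Gamma^\pm,\Pi^\pm)_{j+1/2}$, and define $E^\pm_{j+1/2}=\Gamma^\pm_{j+1/2}p^\pm_{j+1/2}+\tfrac12\rho^\pm_{j+1/2}(u^\pm_{j+1/2})^2+\Pi^\pm_{j+1/2}$, $\mathbf U^\pm_{j+1/2}=(\rho^\pm,\rho^\pm u^\pm,E^\pm,\Gamma^\pm,\Pi^\pm)^\top_{j+1/2}$, $\mathbf F^\pm_{j+1/2}=\mathbf F(\mathbf U^\pm_{j+1/2})$. Global fluxes: let $\mathbf B_j=\big(0,0,0,\tfrac{\Gamma^-_{j+1/2}+\Gamma^+_{j-1/2}}{2}(u^-_{j+1/2}-u^+_{j-1/2}),\tfrac{\Pi^-_{j+1/2}+\Pi^+_{j-1/2}}{2}(u^-_{j+1/2}-u^+_{j-1/2})\big)^\top$ and $\mathbf B_{\Psi,j+1/2}=\big(0,0,0,\tfrac{\Gamma^+_{j+1/2}+\Gamma^-_{j+1/2}}{2}(u^+_{j+1/2}-u^-_{j+1/2}),\tfrac{\Pi^+_{j+1/2}+\Pi^-_{j+1/2}}{2}(u^+_{j+1/2}-u^-_{j+1/2})\big)^\top$.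 Set $\mathbf R^-_{1/2}=\mathbf 0$, $\mathbf R^+_{1/2}=\mathbf B_{\Psi,1/2}$, and recursively $\mathbf R^-_{j+1/2}=\mathbf R^+_{j-1/2}+\mathbf B_j$, $\mathbf R^+_{j+1/2}=\mathbf R^-_{j+1/2}+\mathbf B_{\Psi,j+1/2}$ for $j=1,\dots,N$; then $\mathbf K^\pm_{j+1/2}=\mathbf F^\pm_{j+1/2}-\mathbf R^\pm_{j+1/2}$. Local speeds: $c=\sqrt{[(1+\Gamma)p+\Pi]/(\Gamma\rho)}$ evaluated at the $\pm$ point values, $a^+_{j+1/2}=\max\{u^-_{j+1/2}+c^-_{j+1/2},u^+_{j+1/2}+c^+_{j+1/2},0\}$, $a^-_{j+1/2}=\min\{u^-_{j+1/2}-c^-_{j+1/2},u^+_{j+1/2}-c^+_{j+1/2},0\}$. Anti-diffusion: $\mathbf U^*_{j+1/2}=\dfrac{a^+_{j+1/2}\mathbf U^+_{j+1/2}-a^-_{j+1/2}\mathbf U^-_{j+1/2}-(\mathbf K^+_{j+1/2}-\mathbf K^-_{j+1/2})}{a^+_{j+1/2}-a^-_{j+1/2}}$ with components $(\rho^*,(\rho u)^*,E^*,\Gamma^*,\Pi^* )_{j+1/2}$, $u^*_{j+1/2}=(\rho u)^*_{j+1/2}/\rho^*_{j+1/2}$; for $w\in\{\rho,\Gamma,\Pi\}$, $q^w_{j+1/2}={\rm minmod}\big(-a^-_{j+1/2}(w^*_{j+1/2}-w^-_{j+1/2}),\,a^+_{j+1/2}(w^+_{j+1/2}-w^*_{j+1/2})\big)$;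 and $\mathbf q_{j+1/2}=q^\rho_{j+1/2}\big(1,u^*,\tfrac12(u^* )^2,0,0\big)^\top_{j+1/2}+q^\Gamma_{j+1/2}\big(0,0,\tfrac{1}{\Gamma^*}\big[E^*-\tfrac{((\rho u)^* )^2}{2\rho^*}-\Pi^*\big],1,0\big)^\top_{j+1/2}+q^\Pi_{j+1/2}(0,0,1,0,1)^\top$. Numerical flux: $\boldsymbol{\mathcal K}_{j+1/2}=\dfrac{a^+_{j+1/2}\mathbf K^-_{j+1/2}-a^-_{j+1/2}\mathbf K^+_{j+1/2}}{a^+_{j+1/2}-a^-_{j+1/2}}+\dfrac{a^+_{j+1/2}a^-_{j+1/2}}{a^+_{j+1/2}-a^-_{j+1/2}}(\mathbf U^+_{j+1/2}-\mathbf U^-_{j+1/2})+\mathbf q_{j+1/2}$. Semi-discrete LD PCCU scheme: $\dfrac{d}{dt}\overline{\mathbf U}_j=-\dfrac{\boldsymbol{\mathcal K}_{j+1/2}-\boldsymbol{\mathcal K}_{j-1/2}}{\Delta x}$, $j=1,\dots,N$. *)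

theory Defs
  imports Complex_Main
begin

text \<open>Cells are indexed by integers (cells 1..N are interior,
all other integers are ghost cells). Interface x_{j+1/2} is indexed by j.
Vectors in R^5 are functions nat => real with components 0..4
(0 = rho, 1 = rho u, 2 = E, 3 = Gamma, 4 = Pi).\<close>

record cdata =
  rh :: "int \<Rightarrow> real"
  mo :: "int \<Rightarrow> real"
  en :: "int \<Rightarrow> real"
  ga :: "int \<Rightarrow> real"
  pq :: "int \<Rightarrow> real"

type_synonym limiter = "(int \<Rightarrow> real) \<Rightarrow> int \<Rightarrow> real"

definition vec5 :: "real \<Rightarrow> real \<Rightarrow> real \<Rightarrow> real \<Rightarrow> real \<Rightarrow> nat \<Rightarrow> real" where
  "vec5 a b c d e = (\<lambda>k. if k = 0 then a else if k = 1 then b else if k = 2 then c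
                          else if k = 3 then d else e)"

definition minmod :: "real \<Rightarrow> real \<Rightarrow> real" where
  "minmod c1 c2 = (if c1 > 0 \<and> c2 > 0 then min c1 c2
                   else if c1 < 0 \<and> c2 < 0 then max c1 c2 else 0)"

definition vel :: "cdata \<Rightarrow> int \<Rightarrow> real" where
  "vel D j = mo D j / rh D j"

definition pres :: "cdata \<Rightarrow> int \<Rightarrow> real" where
  "pres D j = (en D j - (mo D j)\<^sup>2 / (2 * rh D j) - pq D j) / ga D j"

definition Fphys :: "(nat \<Rightarrow> real) \<Rightarrow> nat \<Rightarrow> real" where
  "Fphys U = (let r = U 0; m = U 1; e = U 2; g = U 3; q = U 4; u = m / r;
                  p = (e - m\<^sup>2 / (2 * r) - q) / g
              in vec5 (r * u) (r * u\<^sup>2 + p) (u * (e + p)) (u * g) (u * q))"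

(* reconstruction: left value V^-_{j+1/2} and right value V^+_{j+1/2} of a component w *)
definition recL :: "limiter \<Rightarrow> real \<Rightarrow> (int \<Rightarrow> real) \<Rightarrow> int \<Rightarrow> real" where
  "recL sl dx w j = w j + dx / 2 * sl w j"

definition recR :: "limiter \<Rightarrow> real \<Rightarrow> (int \<Rightarrow> real) \<Rightarrow> int \<Rightarrow> real" where
  "recR sl dx w j = w (j + 1) - dx / 2 * sl w (j + 1)"

definition rhoM where "rhoM sl dx D = recL sl dx (rh D)"
definition rhoP where "rhoP sl dx D = recR sl dx (rh D)"
definition uM where "uM sl dx D = recL sl dx (vel D)"
definition uP where "uP sl dx D = recR sl dx (vel D)"
definition pM where "pM sl dx D = recL sl dx (pres D)"
definition pP where "pP sl dx D = recR sl dx (pres D)"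
definition GM where "GM sl dx D = recL sl dx (ga D)"
definition GP where "GP sl dx D = recR sl dx (ga D)"
definition PM where "PM sl dx D = recL sl dx (pq D)"
definition PP where "PP sl dx D = recR sl dx (pq D)"

definition EM :: "limiter \<Rightarrow> real \<Rightarrow> cdata \<Rightarrow> int \<Rightarrow> real" where
  "EM sl dx D j = GM sl dx D j * pM sl dx D j + rhoM sl dx D j * (uM sl dx D j)\<^sup>2 / 2 + PM sl dx D j"
definition EP :: "limiter \<Rightarrow> real \<Rightarrow> cdata \<Rightarrow> int \<Rightarrow> real" where
  "EP sl dx D j = GP sl dx D j * pP sl dx D j + rhoP sl dx D j * (uP sl dx D j)\<^sup>2 / 2 + PP sl dx D j"

definition UM :: "limiter \<Rightarrow> real \<Rightarrow> cdata \<Rightarrow> int \<Rightarrow> nat \<Rightarrow> real" where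
  "UM sl dx D j = vec5 (rhoM sl dx D j) (rhoM sl dx D j * uM sl dx D j) (EM sl dx D j)
                       (GM sl dx D j) (PM sl dx D j)"
definition UP :: "limiter \<Rightarrow> real \<Rightarrow> cdata \<Rightarrow> int \<Rightarrow> nat \<Rightarrow> real" where
  "UP sl dx D j = vec5 (rhoP sl dx D j) (rhoP sl dx D j * uP sl dx D j) (EP sl dx D j)
                       (GP sl dx D j) (PP sl dx D j)"

(* B_j (cell j) and B_{Psi,j+1/2} (interface j) *)
definition Bc :: "limiter \<Rightarrow> real \<Rightarrow> cdata \<Rightarrow> int \<Rightarrow> nat \<Rightarrow> real" where
  "Bc sl dx D j = vec5 0 0 0
     ((GM sl dx D j + GP sl dx D (j - 1)) / 2 * (uM sl dx D j - uP sl dx D (j - 1)))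
     ((PM sl dx D j + PP sl dx D (j - 1)) / 2 * (uM sl dx D j - uP sl dx D (j - 1)))"
definition BPsi :: "limiter \<Rightarrow> real \<Rightarrow> cdata \<Rightarrow> int \<Rightarrow> nat \<Rightarrow> real" where
  "BPsi sl dx D j = vec5 0 0 0
     ((GP sl dx D j + GM sl dx D j) / 2 * (uP sl dx D j - uM sl dx D j))
     ((PP sl dx D j + PM sl dx D j) / 2 * (uP sl dx D j - uM sl dx D j))"

(* global fluxes: Rm n = R^-_{n+1/2}, Rp n = R^+_{n+1/2} *)
fun Rm :: "limiter \<Rightarrow> real \<Rightarrow> cdata \<Rightarrow> nat \<Rightarrow> nat \<Rightarrow> real" where
  "Rm sl dx D 0 = (\<lambda>k. 0)"
| "Rm sl dx D (Suc n) = (\<lambda>k. Rm sl dx D n k + BPsi sl dx D (int n) k + Bc sl dx D (int n + 1) k)"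

definition Rp :: "limiter \<Rightarrow> real \<Rightarrow> cdata \<Rightarrow> nat \<Rightarrow> nat \<Rightarrow> real" where
  "Rp sl dx D n = (\<lambda>k. Rm sl dx D n k + BPsi sl dx D (int n) k)"

definition Km :: "limiter \<Rightarrow> real \<Rightarrow> cdata \<Rightarrow> nat \<Rightarrow> nat \<Rightarrow> real" where
  "Km sl dx D n = (\<lambda>k. Fphys (UM sl dx D (int n)) k - Rm sl dx D n k)"
definition Kp :: "limiter \<Rightarrow> real \<Rightarrow> cdata \<Rightarrow> nat \<Rightarrow> nat \<Rightarrow> real" where
  "Kp sl dx D n = (\<lambda>k. Fphys (UP sl dx D (int n)) k - Rp sl dx D n k)"

definition snd_radicand :: "real \<Rightarrow> real \<Rightarrow> real \<Rightarrow> real \<Rightarrow> real" where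
  "snd_radicand r p g q = ((1 + g) * p + q) / (g * r)"

definition cM where "cM sl dx D j = sqrt (snd_radicand (rhoM sl dx D j) (pM sl dx D j) (GM sl dx D j) (PM sl dx D j))"
definition cP where "cP sl dx D j = sqrt (snd_radicand (rhoP sl dx D j) (pP sl dx D j) (GP sl dx D j) (PP sl dx D j))"

definition aPl :: "limiter \<Rightarrow> real \<Rightarrow> cdata \<Rightarrow> int \<Rightarrow> real" where
  "aPl sl dx D j = max (max (uM sl dx D j + cM sl dx D j) (uP sl dx D j + cP sl dx D j)) 0"
definition aMi :: "limiter \<Rightarrow> real \<Rightarrow> cdata \<Rightarrow> int \<Rightarrow> real" where
  "aMi sl dx D j = min (min (uM sl dx D j - cM sl dx D j) (uP sl dx D j - cP sl dx D j)) 0"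

definition Ustar :: "limiter \<Rightarrow> real \<Rightarrow> cdata \<Rightarrow> nat \<Rightarrow> nat \<Rightarrow> real" where
  "Ustar sl dx D n = (\<lambda>k.
     (aPl sl dx D (int n) * UP sl dx D (int n) k - aMi sl dx D (int n) * UM sl dx D (int n) k
      - (Kp sl dx D n k - Km sl dx D n k)) / (aPl sl dx D (int n) - aMi sl dx D (int n)))"

definition qw :: "limiter \<Rightarrow> real \<Rightarrow> cdata \<Rightarrow> nat \<Rightarrow> nat \<Rightarrow> real" where
  "qw sl dx D n i = minmod (- aMi sl dx D (int n) * (Ustar sl dx D n i - UM sl dx D (int n) i))
                           (aPl sl dx D (int n) * (UP sl dx D (int n) i - Ustar sl dx D n i))"

definition qvec :: "limiter \<Rightarrow> real \<Rightarrow> cdata \<Rightarrow> nat \<Rightarrow> nat \<Rightarrow> real" where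
  "qvec sl dx D n = (let S = Ustar sl dx D n; us = S 1 / S 0;
       eps = (S 2 - (S 1)\<^sup>2 / (2 * S 0) - S 4) / S 3;
       q1 = qw sl dx D n 0; q2 = qw sl dx D n 3; q3 = qw sl dx D n 4
     in (\<lambda>k. q1 * vec5 1 us (us\<^sup>2 / 2) 0 0 k + q2 * vec5 0 0 eps 1 0 k + q3 * vec5 0 0 1 0 1 k))"

definition Kflux :: "limiter \<Rightarrow> real \<Rightarrow> cdata \<Rightarrow> nat \<Rightarrow> nat \<Rightarrow> real" where
  "Kflux sl dx D n = (let ap = aPl sl dx D (int n); am = aMi sl dx D (int n) in
     (\<lambda>k. (ap * Km sl dx D n k - am * Kp sl dx D n k) / (ap - am)
          + ap * am / (ap - am) * (UP sl dx D (int n) k - UM sl dx D (int n) k)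
          + qvec sl dx D n k))"

definition rhs :: "limiter \<Rightarrow> real \<Rightarrow> cdata \<Rightarrow> nat \<Rightarrow> nat \<Rightarrow> real" where
  "rhs sl dx D j = (\<lambda>k. - (Kflux sl dx D j k - Kflux sl dx D (j - 1) k) / dx)"

definition well_defined :: "limiter \<Rightarrow> real \<Rightarrow> cdata \<Rightarrow> nat \<Rightarrow> bool" where
  "well_defined sl dx D N \<longleftrightarrow> (\<forall>n\<le>N. let j = int n in
      rhoM sl dx D j > 0 \<and> rhoP sl dx D j > 0 \<and> GM sl dx D j > 0 \<and> GP sl dx D j > 0
    \<and> snd_radicand (rhoM sl dx D j) (pM sl dx D j) (GM sl dx D j) (PM sl dx D j) \<ge> 0
    \<and> snd_radicand (rhoP sl dx D j) (pP sl dx D j) (GP sl dx D j) (PP sl dx D j) \<ge> 0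
    \<and> aPl sl dx D j - aMi sl dx D j > 0
    \<and> Ustar sl dx D n 0 \<noteq> 0 \<and> Ustar sl dx D n 3 \<noteq> 0)"

definition euler :: "limiter \<Rightarrow> real \<Rightarrow> cdata \<Rightarrow> real \<Rightarrow> nat \<Rightarrow> nat \<Rightarrow> real" where
  "euler sl dx D dt j = (\<lambda>k. vec5 (rh D (int j)) (mo D (int j)) (en D (int j)) (ga D (int j)) (pq D (int j)) k
                     + dt * rhs sl dx D j k)"

end

theory Submission
  imports Defs
begin

text \<open>Every interface quantity of the scheme is built from \<open>U\<^sup>\<plusminus>\<close> and
\<open>K\<^sup>\<plusminus>\<close> by linear operations, plus the anti-diffusion \<open>q\<close>. Hence a linear
functional that agrees on \<open>U\<^sup>-\<close> and \<open>U\<^sup>+\<close>, takes one and the same value on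
\<open>K\<^sup>\<plusminus>\<close> at every interface and kills \<open>q\<close>, takes that value on every numerical
flux, and so annihilates the right-hand side.

For constant \<open>\<Gamma>, \<Pi>\<close> use the \<open>\<Gamma>\<close>- and \<open>\<Pi>\<close>-components: the reconstructions are
constant, the global flux telescopes to \<open>R\<^sub>\<Gamma>(j+1/2) = \<Gamma> (u\<^sup>-(j+1/2) - u\<^sup>-(1/2))\<close>,
so \<open>K\<^sup>\<plusminus>\<^sub>\<Gamma> = \<Gamma> u\<^sup>-(1/2)\<close> everywhere, and \<open>U\<^sup>*\<^sub>\<Gamma> = \<Gamma>\<close> switches the minmod off.
For constant \<open>u, p\<close> the sources vanish, \<open>K\<^sup>\<plusminus> = F(U\<^sup>\<plusminus>)\<close>, and one uses the two
functionals whose common kernel consists of the states with velocity \<open>u\<close> and pressure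
\<open>p\<close>. They vanish on \<open>U\<^sup>\<plusminus>\<close>, on \<open>U\<^sup>*\<close> (so \<open>q\<close> is built from \<open>u\<^sup>* = u\<close>, \<open>\<epsilon>\<^sup>* = p\<close>) and on the
cell averages, and equal \<open>p\<close> and \<open>u p\<close> on \<open>F(U\<^sup>\<plusminus>)\<close>. Thus the Euler update stays in the
kernel.\<close>

lemma vec5_simps [simp]:
  "vec5 a b c d e 0 = a" "vec5 a b c d e (Suc 0) = b" "vec5 a b c d e 2 = c"
  "vec5 a b c d e 3 = d" "vec5 a b c d e 4 = e"
  by (simp_all add: vec5_def)

definition dot5 :: "(nat \<Rightarrow> real) \<Rightarrow> (nat \<Rightarrow> real) \<Rightarrow> real" where
  "dot5 c V = c 0 * V 0 + c 1 * V 1 + c 2 * V 2 + c 3 * V 3 + c 4 * V 4"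

lemma dot5_unit: "i \<in> {3, 4} \<Longrightarrow> dot5 (\<lambda>k. of_bool (k = i)) V = V i"
  by (auto simp: dot5_def)

lemma dot5_Ustar:
  "dot5 c (Ustar sl dx D n) =
     (aPl sl dx D (int n) * dot5 c (UP sl dx D (int n)) - aMi sl dx D (int n) * dot5 c (UM sl dx D (int n))
      - (dot5 c (Kp sl dx D n) - dot5 c (Km sl dx D n))) / (aPl sl dx D (int n) - aMi sl dx D (int n))"
  by (simp add: dot5_def Ustar_def add_divide_distrib diff_divide_distrib algebra_simps)

lemma dot5_Kflux:
  "dot5 c (Kflux sl dx D n) =
     (aPl sl dx D (int n) * dot5 c (Km sl dx D n) - aMi sl dx D (int n) * dot5 c (Kp sl dx D n))
       / (aPl sl dx D (int n) - aMi sl dx D (int n))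
     + aPl sl dx D (int n) * aMi sl dx D (int n) / (aPl sl dx D (int n) - aMi sl dx D (int n))
       * (dot5 c (UP sl dx D (int n)) - dot5 c (UM sl dx D (int n)))
     + dot5 c (qvec sl dx D n)"
  by (simp add: dot5_def Kflux_def Let_def add_divide_distrib diff_divide_distrib algebra_simps)

lemma dot5_rhs:
  "dot5 c (rhs sl dx D j) = - (dot5 c (Kflux sl dx D j) - dot5 c (Kflux sl dx D (j - 1))) / dx"
  by (simp add: dot5_def rhs_def add_divide_distrib diff_divide_distrib algebra_simps)

lemma dot5_Ustar_uniform:
  assumes "aPl sl dx D (int n) \<noteq> aMi sl dx D (int n)"
    and "dot5 c (UM sl dx D (int n)) = w" "dot5 c (UP sl dx D (int n)) = w"
    and "dot5 c (Kp sl dx D n) = dot5 c (Km sl dx D n)"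
  shows "dot5 c (Ustar sl dx D n) = w"
  using assms by (simp add: dot5_Ustar field_simps)

lemma dot5_Kflux_uniform:
  assumes "aPl sl dx D (int n) \<noteq> aMi sl dx D (int n)"
    and "dot5 c (UP sl dx D (int n)) = dot5 c (UM sl dx D (int n))"
    and "dot5 c (Kp sl dx D n) = dot5 c (Km sl dx D n)"
  shows "dot5 c (Kflux sl dx D n) = dot5 c (Km sl dx D n) + dot5 c (qvec sl dx D n)"
  using assms by (simp add: dot5_Kflux field_simps)

lemma dot5_rhs_eq_0_if_flux_invariant:
  assumes "\<And>n. n \<le> N \<Longrightarrow> aPl sl dx D (int n) \<noteq> aMi sl dx D (int n)"
    and "\<And>n. n \<le> N \<Longrightarrow> dot5 c (UP sl dx D (int n)) = dot5 c (UM sl dx D (int n))"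
    and "\<And>n. n \<le> N \<Longrightarrow> dot5 c (Km sl dx D n) = \<kappa>"
    and "\<And>n. n \<le> N \<Longrightarrow> dot5 c (Kp sl dx D n) = \<kappa>"
    and "\<And>n. n \<le> N \<Longrightarrow> dot5 c (qvec sl dx D n) = 0"
    and "j \<in> {1..N}"
  shows "dot5 c (rhs sl dx D j) = 0"
proof -
  have "dot5 c (Kflux sl dx D n) = \<kappa>" if "n \<le> N" for n
    using assms(1-5)[OF that] dot5_Kflux_uniform by simp
  then have "dot5 c (Kflux sl dx D j) = \<kappa>" "dot5 c (Kflux sl dx D (j - 1)) = \<kappa>"
    using \<open>j \<in> {1..N}\<close> by auto
  then show ?thesis
    by (simp add: dot5_rhs)
qed

lemma dot5_euler:
  "dot5 c (euler sl dx D dt j) =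
     dot5 c (vec5 (rh D (int j)) (mo D (int j)) (en D (int j)) (ga D (int j)) (pq D (int j)))
     + dt * dot5 c (rhs sl dx D j)"
  by (simp add: dot5_def euler_def algebra_simps)

lemma qw_eq_0:
  "Ustar sl dx D n i = UM sl dx D (int n) i \<Longrightarrow> UP sl dx D (int n) i = UM sl dx D (int n) i
   \<Longrightarrow> qw sl dx D n i = 0"
  by (simp add: qw_def minmod_def)

lemma qvec_Gamma_Pi: "qvec sl dx D n 3 = qw sl dx D n 3" "qvec sl dx D n 4 = qw sl dx D n 4"
  by (simp_all add: qvec_def Let_def)

lemma recL_const: "(\<And>w c j. (\<forall>i. w i = c) \<Longrightarrow> sl w j = 0) \<Longrightarrow> \<forall>i. w i = c \<Longrightarrow> recL sl dx w j = c"
  and recR_const: "(\<And>w c j. (\<forall>i. w i = c) \<Longrightarrow> sl w j = 0) \<Longrightarrow> \<forall>i. w i = c \<Longrightarrow> recR sl dx w j = c"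
  by (simp_all add: recL_def recR_def)

lemma recL_add_recR: "recL sl dx w j + recR sl dx w (j - 1) = 2 * w j"
  by (simp add: recL_def recR_def)

definition prim_state :: "real \<Rightarrow> real \<Rightarrow> real \<Rightarrow> real \<Rightarrow> real \<Rightarrow> nat \<Rightarrow> real" where
  "prim_state r u p g q = vec5 r (r * u) (g * p + r * u\<^sup>2 / 2 + q) g q"

lemma UM_prim_state:
  "UM sl dx D j = prim_state (rhoM sl dx D j) (uM sl dx D j) (pM sl dx D j) (GM sl dx D j) (PM sl dx D j)"
  and UP_prim_state:
  "UP sl dx D j = prim_state (rhoP sl dx D j) (uP sl dx D j) (pP sl dx D j) (GP sl dx D j) (PP sl dx D j)"
  by (simp_all add: UM_def EM_def UP_def EP_def prim_state_def)

lemma vec5_eq_prim_state: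
  "r \<noteq> 0 \<Longrightarrow> g \<noteq> 0 \<Longrightarrow> vec5 r m e g q = prim_state r (m / r) ((e - m\<^sup>2 / (2 * r) - q) / g) g q"
  by (simp add: prim_state_def field_simps power2_eq_square)

lemma Fphys_prim_state:
  "r \<noteq> 0 \<Longrightarrow> g \<noteq> 0 \<Longrightarrow> Fphys (prim_state r u p g q) =
     vec5 (r * u) (r * u\<^sup>2 + p) (u * (g * p + r * u\<^sup>2 / 2 + q + p)) (u * g) (u * q)"
  by (auto simp: fun_eq_iff vec5_def Fphys_def prim_state_def Let_def field_simps power2_eq_square)

definition vel_weights :: "real \<Rightarrow> nat \<Rightarrow> real" where
  "vel_weights u = vec5 (- u) 1 0 0 0"

definition pres_weights :: "real \<Rightarrow> real \<Rightarrow> nat \<Rightarrow> real" where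
  "pres_weights u p = vec5 (- u\<^sup>2 / 2) 0 1 (- p) (- 1)"

lemma dot5_weights_prim_state:
  "dot5 (vel_weights u) (prim_state r u p g q) = 0"
  "dot5 (pres_weights u p) (prim_state r u p g q) = 0"
  by (simp_all add: dot5_def vel_weights_def pres_weights_def prim_state_def algebra_simps)

lemma dot5_weights_Fphys_prim_state:
  assumes "r \<noteq> 0" "g \<noteq> 0"
  shows "dot5 (vel_weights u) (Fphys (prim_state r u p g q)) = p"
    "dot5 (pres_weights u p) (Fphys (prim_state r u p g q)) = u * p"
  using assms by (simp_all add: Fphys_prim_state dot5_def vel_weights_def pres_weights_def
      algebra_simps power2_eq_square)

lemma vel_pres_if_dot5_weights_eq_0:
  assumes "V 0 \<noteq> 0" "V 3 \<noteq> 0"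
    and "dot5 (vel_weights u) V = 0" "dot5 (pres_weights u p) V = 0"
  shows "V 1 / V 0 = u" "(V 2 - (V 1)\<^sup>2 / (2 * V 0) - V 4) / V 3 = p"
proof -
  have mom: "V 1 = u * V 0" and en: "V 2 = p * V 3 + u\<^sup>2 / 2 * V 0 + V 4"
    using assms(3,4) by (simp_all add: dot5_def vel_weights_def pres_weights_def algebra_simps)
  show "V 1 / V 0 = u"
    using assms(1) unfolding mom by simp
  show "(V 2 - (V 1)\<^sup>2 / (2 * V 0) - V 4) / V 3 = p"
    using assms(1,2) unfolding mom en by (simp add: field_simps power2_eq_square)
qed

context
  fixes sl :: limiter and dx :: real and N :: nat and D :: cdata and Gh Ph :: real
  assumes lim: "\<And>w c j. (\<forall>i. w i = c) \<Longrightarrow> sl w j = 0"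
    and wd: "well_defined sl dx D N"
    and ga_const: "\<forall>j. ga D j = Gh" and pq_const: "\<forall>j. pq D j = Ph"
begin

lemma recon_ga_pq_const [simp]:
  "GM sl dx D j = Gh" "GP sl dx D j = Gh" "PM sl dx D j = Ph" "PP sl dx D j = Ph"
  by (simp_all add: GM_def GP_def PM_def PP_def recL_const recR_const lim ga_const pq_const)

lemma Rm_const_ga_pq:
  "Rm sl dx D n k = vec5 0 0 0 Gh Ph k * (uM sl dx D (int n) - uM sl dx D 0)"
  by (induction n) (auto simp: Bc_def BPsi_def vec5_def algebra_simps)

lemma K_Gamma_Pi:
  assumes "n \<le> N" "i \<in> {3, 4}"
  shows "Km sl dx D n i = vec5 0 0 0 Gh Ph i * uM sl dx D 0"
    "Kp sl dx D n i = vec5 0 0 0 Gh Ph i * uM sl dx D 0"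
proof -
  have "rhoM sl dx D (int n) > 0" "rhoP sl dx D (int n) > 0" "Gh > 0"
    using wd assms(1) by (auto simp: well_defined_def Let_def)
  then show "Km sl dx D n i = vec5 0 0 0 Gh Ph i * uM sl dx D 0"
    "Kp sl dx D n i = vec5 0 0 0 Gh Ph i * uM sl dx D 0"
    using assms(2)
    by (auto simp: Km_def Kp_def Rp_def UM_prim_state UP_prim_state Fphys_prim_state
        Rm_const_ga_pq BPsi_def algebra_simps)
qed

lemma rhs_Gamma_Pi_eq_0:
  assumes "i \<in> {3, 4}" "j \<in> {1..N}"
  shows "rhs sl dx D j i = 0"
proof -
  let ?e = "\<lambda>k. of_bool (k = i) :: real"
  have jump: "aPl sl dx D (int n) \<noteq> aMi sl dx D (int n)" if "n \<le> N" for n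
    using wd that by (auto simp: well_defined_def Let_def)
  have U: "UM sl dx D (int n) i = vec5 0 0 0 Gh Ph i" "UP sl dx D (int n) i = vec5 0 0 0 Gh Ph i" for n
    using assms(1) by (auto simp: UM_def UP_def)
  have "qvec sl dx D n i = 0" if "n \<le> N" for n
  proof -
    have "Ustar sl dx D n i = vec5 0 0 0 Gh Ph i"
      using dot5_Ustar_uniform[of sl dx D n ?e] jump[OF that] U K_Gamma_Pi[OF that assms(1)] assms(1)
      by (simp add: dot5_unit)
    then show ?thesis
      using assms(1) qw_eq_0 U qvec_Gamma_Pi by auto
  qed
  then have "dot5 ?e (rhs sl dx D j) = 0"
    using dot5_rhs_eq_0_if_flux_invariant[of N sl dx D ?e] jump U K_Gamma_Pi assms
    by (simp add: dot5_unit)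
  then show ?thesis
    using assms(1) by (simp add: dot5_unit)
qed

end

context
  fixes sl :: limiter and dx :: real and N :: nat and D :: cdata and uh ph :: real
  assumes lim: "\<And>w c j. (\<forall>i. w i = c) \<Longrightarrow> sl w j = 0"
    and wd: "well_defined sl dx D N"
    and vel_const: "\<forall>j. vel D j = uh" and pres_const: "\<forall>j. pres D j = ph"
begin

lemma recon_vel_pres_const [simp]:
  "uM sl dx D j = uh" "uP sl dx D j = uh" "pM sl dx D j = ph" "pP sl dx D j = ph"
  by (simp_all add: uM_def uP_def pM_def pP_def recL_const recR_const lim vel_const pres_const)

lemma Rm_eq_0: "Rm sl dx D n = (\<lambda>k. 0)"
  by (induction n) (auto simp: Bc_def BPsi_def vec5_def)

lemma Rp_eq_0: "Rp sl dx D n = (\<lambda>k. 0)"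
  by (auto simp: Rp_def Rm_eq_0 BPsi_def vec5_def)

lemma wd_at:
  assumes "n \<le> N"
  shows "rhoM sl dx D (int n) > 0" "rhoP sl dx D (int n) > 0"
    "GM sl dx D (int n) > 0" "GP sl dx D (int n) > 0"
    "aPl sl dx D (int n) \<noteq> aMi sl dx D (int n)"
    "Ustar sl dx D n 0 \<noteq> 0" "Ustar sl dx D n 3 \<noteq> 0"
  using wd assms by (auto simp: well_defined_def Let_def)

lemma dot5_weights_K:
  assumes "n \<le> N" "c = vel_weights uh \<and> \<kappa> = ph \<or> c = pres_weights uh ph \<and> \<kappa> = uh * ph"
  shows "dot5 c (Km sl dx D n) = \<kappa>" "dot5 c (Kp sl dx D n) = \<kappa>"
  using assms wd_at[OF assms(1)]
  by (auto simp: Km_def Kp_def Rm_eq_0 Rp_eq_0 UM_prim_state UP_prim_state dot5_weights_Fphys_prim_state)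

lemma dot5_weights_qvec:
  assumes "n \<le> N" "c = vel_weights uh \<or> c = pres_weights uh ph"
  shows "dot5 c (qvec sl dx D n) = 0"
proof -
  let ?S = "Ustar sl dx D n"
  have "dot5 c' ?S = 0" if "c' = vel_weights uh \<or> c' = pres_weights uh ph" for c'
    using that dot5_Ustar_uniform[of sl dx D n c' 0] wd_at[OF assms(1)] dot5_weights_K[OF assms(1)]
    by (auto simp: UM_prim_state UP_prim_state dot5_weights_prim_state)
  then have "?S 1 / ?S 0 = uh" "(?S 2 - (?S 1)\<^sup>2 / (2 * ?S 0) - ?S 4) / ?S 3 = ph"
    using vel_pres_if_dot5_weights_eq_0[of ?S uh ph] wd_at[OF assms(1)] by auto
  then show ?thesis
    using assms(2)
    by (auto simp: qvec_def Let_def dot5_def vel_weights_def pres_weights_def algebra_simps)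
qed

lemma cell_prim_state:
  assumes "j \<in> {1..N}"
  shows "vec5 (rh D (int j)) (mo D (int j)) (en D (int j)) (ga D (int j)) (pq D (int j))
       = prim_state (rh D (int j)) uh ph (ga D (int j)) (pq D (int j))"
proof -
  have j: "int (j - 1) = int j - 1" "j - 1 \<le> N" "j \<le> N" using assms by auto
  have "rhoM sl dx D (int j) + rhoP sl dx D (int (j - 1)) > 0"
    "GM sl dx D (int j) + GP sl dx D (int (j - 1)) > 0"
    using wd_at[OF j(2)] wd_at[OF j(3)] by auto
  then have "rh D (int j) > 0" "ga D (int j) > 0"
    unfolding rhoM_def rhoP_def GM_def GP_def j(1) recL_add_recR by auto
  then show ?thesis
    using vec5_eq_prim_state vel_const pres_const by (simp add: vel_def pres_def)
qed

lemma dot5_weights_euler: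
  assumes "j \<in> {1..N}" "c = vel_weights uh \<or> c = pres_weights uh ph"
  shows "dot5 c (euler sl dx D dt j) = 0"
proof -
  obtain \<kappa> where \<kappa>: "c = vel_weights uh \<and> \<kappa> = ph \<or> c = pres_weights uh ph \<and> \<kappa> = uh * ph"
    using assms(2) by blast
  have "dot5 c (rhs sl dx D j) = 0"
  proof (rule dot5_rhs_eq_0_if_flux_invariant[where \<kappa> = \<kappa>])
    fix n assume n: "n \<le> N"
    show "aPl sl dx D (int n) \<noteq> aMi sl dx D (int n)" using wd_at[OF n] by simp
    show "dot5 c (UP sl dx D (int n)) = dot5 c (UM sl dx D (int n))"
      using assms(2) by (auto simp: UM_prim_state UP_prim_state dot5_weights_prim_state)
    show "dot5 c (Km sl dx D n) = \<kappa>" "dot5 c (Kp sl dx D n) = \<kappa>"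
      using dot5_weights_K[OF n \<kappa>] by simp_all
    show "dot5 c (qvec sl dx D n) = 0" using dot5_weights_qvec[OF n assms(2)] .
  qed (use assms(1) in simp)
  then show ?thesis
    using assms by (auto simp: dot5_euler cell_prim_state dot5_weights_prim_state)
qed

end

theorem theorem1:
  fixes sl :: limiter and dx :: real and N :: nat and D :: cdata
  assumes lim: "\<And>w c j. (\<forall>i. w i = c) \<Longrightarrow> sl w j = 0"
    and dx: "dx > 0"
    and wd: "well_defined sl dx D N"
  shows "((\<exists>Gh Ph. (\<forall>j. ga D j = Gh) \<and> (\<forall>j. pq D j = Ph)) \<longrightarrow>
            (\<forall>j\<in>{1..N}. rhs sl dx D j 3 = 0 \<and> rhs sl dx D j 4 = 0))
       \<and> (\<forall>uh ph dt. (\<forall>j. vel D j = uh) \<and> (\<forall>j. pres D j = ph) \<longrightarrow>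
            (\<forall>j\<in>{1..N}. euler sl dx D dt j 0 \<noteq> 0 \<and> euler sl dx D dt j 3 \<noteq> 0 \<longrightarrow>
               euler sl dx D dt j 1 / euler sl dx D dt j 0 = uh
             \<and> (euler sl dx D dt j 2 - (euler sl dx D dt j 1)\<^sup>2 / (2 * euler sl dx D dt j 0)
                  - euler sl dx D dt j 4) / euler sl dx D dt j 3 = ph))"
proof (intro conjI allI impI ballI)
  fix j :: nat assume j: "j \<in> {1..N}"
  {
    assume "\<exists>Gh Ph. (\<forall>j. ga D j = Gh) \<and> (\<forall>j. pq D j = Ph)"
    then obtain Gh Ph where "\<forall>j. ga D j = Gh" "\<forall>j. pq D j = Ph" by blast
    from rhs_Gamma_Pi_eq_0[OF lim wd this _ j]
    show "rhs sl dx D j 3 = 0" "rhs sl dx D j 4 = 0" by simp_all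
  }
  fix uh ph dt
  assume vel_pres_const: "(\<forall>j. vel D j = uh) \<and> (\<forall>j. pres D j = ph)"
    and nz: "euler sl dx D dt j 0 \<noteq> 0 \<and> euler sl dx D dt j 3 \<noteq> 0"
  have "dot5 c (euler sl dx D dt j) = 0" if "c = vel_weights uh \<or> c = pres_weights uh ph" for c
    using vel_pres_const by (intro dot5_weights_euler[OF lim wd _ _ j that]) simp_all
  with nz vel_pres_if_dot5_weights_eq_0[of "euler sl dx D dt j" uh ph]
  show "euler sl dx D dt j 1 / euler sl dx D dt j 0 = uh"
    "(euler sl dx D dt j 2 - (euler sl dx D dt j 1)\<^sup>2 / (2 * euler sl dx D dt j 0)
       - euler sl dx D dt j 4) / euler sl dx D dt j 3 = ph"
    by simp_all
qed

end
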